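(* Let $\Delta_{a_ia_j}$ be the upright triangle that the edge $a_ia_j$ belongs to, and $b_2$ be the midpoint of $a_i$ and $a_j$. We have \begin{equation*} S_N^{\omega}(\alpha,\beta,\lambda)(a_i,a_j)= \begin{cases} \displaystyle 1-\lambda-\frac{A(\alpha,\beta,\lambda)}{64\mathcal{D}(\beta,\lambda)} & \text{if $a_i=a_j$}, \\ \displaystyle -\frac{\Psi(\alpha,\beta,\lambda)\omega_{a_ib_2}\omega_{b_2a_j}}{16\mathcal{D}(\beta,\lambda)} & \text{if $a_i\neq a_j$, $a_i\in V_N\setminus V_0$, and $\Delta_{a_ia_j}$ is traversed CCW}, \\ \displaystyle -\frac{\Psi(\alpha,\beta,\lambda)\omega_{a_ib_2}\omega_{b_2a_j}}{8\mathcal{D}(\beta,\lambda)} & \text{if $a_i\neq a_j$, $a_i\in V_0$, and $\Delta_{a_ia_j}$ is traversed CCW}, \\ \displaystyle -\frac{\overline{\Psi(\alpha,\beta,\lambda)}\omega_{a_ib_2}\omega_{b_2a_j}}{16\mathcal{D}(\beta,\lambda)} & \text{if $a_i\neq a_j$, $a_i\in V_N\setminus V_0$, and $\Delta_{a_ia_j}$ is traversed CW}, \\ \displaystyle -\frac{\overline{\Psi(\alpha,\beta,\lambda)}\omega_{a_ib_2}\omega_{b_2a_j}}{8\mathcal{D}(\beta,\lambda)} & \text{if $a_i\neq a_j$, $a_i\in V_0$, and $\Delta_{a_ia_j}$ is traversed CW}, \end{cases} \end{equation*} where \begin{align*} A(\alpha,\beta,\lambda)&=16\lambda^2-(32+4\cos(2\pi\alpha))\lambda+15+4\cos(2\pi\alpha)+\cos(2\pi(\alpha+\beta)),\\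 \mathcal{D}(\beta,\lambda)&=-\lambda^3+3\lambda^2-\tfrac{45}{16}\lambda+\tfrac{13}{16}-\tfrac{1}{32}\cos(2\pi\beta),\\ \Psi(\alpha,\beta,\lambda)&=(1-\lambda)^2-\tfrac{1}{16}+\tfrac{1-\lambda}{4}(2e^{-2\pi i\alpha}+e^{-2\pi i(2\alpha+\beta)})+\tfrac{1}{16}(e^{-4\pi i \alpha}+2e^{-2\pi i (\alpha+\beta)}). \end{align*}
   Context: Let $G_N=(V_N,E_N)$ be the level-$N$ Sierpinski gasket graph (unit edge length), $V_0$ its three corner vertices, and $V_{N-1}\subset V_N$ the vertices of the nested level-$(N-1)$ graph. Let $\omega$ be a $U(1)$ connection on $G_N$ (unit complex numbers $\omega_{xy}$ with $\omega_{yx}=\overline{\omega_{xy}}$) such that the magnetic flux (holonomy $e^{2\pi i\theta}$ around the counterclockwise cycle) through every upright unit triangle is $\alpha$ and through every downright unit triangle is $\beta$. The magnetic Laplacian $\mathcal{L}^\omega_N$ is the $|V_N|\times|V_N|$ matrix with entries $1$ if $x=y$; $-\tfrac12\omega_{xy}$ if $x\in V_0$, $y\sim x$; $-\tfrac14\omega_{xy}$ if $x\in V_N\setminus V_0$, $y\sim x$; and $0$ otherwise. Write $\mathcal{L}^\omega_N-\lambda I=\begin{bmatrix}A-\lambda I & B\\ C & D-\lambda I\end{bmatrix}$ with respect to the splitting $V_N=V_{N-1}\sqcup (V_N\setminus V_{N-1})$ (here the block $A$ is a matrix, distinct from the function $A(\alpha,\beta,\lambda)$). For $\lambda$ with $D-\lambda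 I$ invertible, the Schur complement is $S_N^{\omega}(\alpha,\beta,\lambda)=(A-\lambda I)-B(D-\lambda I)^{-1}C$, acting on $\ell^2(V_{N-1})$; its entries $(a_i,a_j)$ with $a_i,a_j\in V_{N-1}$ are nonzero only when $a_i=a_j$ or $a_i,a_j$ lie in a common level-$(N-1)$ cell. *)

theory Defs
  imports "HOL-Analysis.Analysis"
begin

text \<open>Vertices of the Sierpinski gasket graph are encoded in triangular-lattice
coordinates: the pair (i,j) stands for the point i*e1 + j*e2 with e1 = (1,0),
e2 = (1/2, sqrt 3/2).  The level-N gasket is the
triangle with corners (0,0), (2^N,0), (0,2^N).\<close>

type_synonym vtx = "int \<times> int"

definition padd :: "vtx \<Rightarrow> vtx \<Rightarrow> vtx" where
  "padd p q = (fst p + fst q, snd p + snd q)"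

definition pscale :: "int \<Rightarrow> vtx \<Rightarrow> vtx" where
  "pscale k p = (k * fst p, k * snd p)"

text \<open>Lower-left corners of the upright unit triangles of G_N.\<close>
fun sg_offs :: "nat \<Rightarrow> vtx set" where
  "sg_offs 0 = {(0,0)}"
| "sg_offs (Suc n) = sg_offs n \<union> padd (2^n, 0) ` sg_offs n \<union> padd (0, 2^n) ` sg_offs n"

text \<open>Corners of the upright triangle with lower-left corner c and side length s,
listed in counterclockwise order: c, c+(s,0), c+(0,s).\<close>
definition up_tri :: "vtx \<Rightarrow> int \<Rightarrow> vtx set" where
  "up_tri c s = {c, padd c (s,0), padd c (0,s)}"

definition ccw_in :: "vtx \<Rightarrow> int \<Rightarrow> vtx \<Rightarrow> vtx \<Rightarrow> bool" where
  "ccw_in c s x y \<longleftrightarrow>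
     (x, y) \<in> {(c, padd c (s,0)), (padd c (s,0), padd c (0,s)), (padd c (0,s), c)}"

definition sg_V :: "nat \<Rightarrow> vtx set" where
  "sg_V n = (\<Union>c\<in>sg_offs n. up_tri c 1)"

definition sg_adj :: "nat \<Rightarrow> vtx \<Rightarrow> vtx \<Rightarrow> bool" where
  "sg_adj n x y \<longleftrightarrow> x \<noteq> y \<and> (\<exists>c\<in>sg_offs n. x \<in> up_tri c 1 \<and> y \<in> up_tri c 1)"

definition sg_V0 :: "nat \<Rightarrow> vtx set" where
  "sg_V0 n = {(0,0), (2^n, 0), (0, 2^n)}"

definition sg_Vnest :: "nat \<Rightarrow> vtx set" where
  "sg_Vnest n = pscale 2 ` sg_V (n - 1)"

definition sg_cells_nest :: "nat \<Rightarrow> vtx set" where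
  "sg_cells_nest n = pscale 2 ` sg_offs (n - 1)"

definition midpt :: "vtx \<Rightarrow> vtx \<Rightarrow> vtx" where
  "midpt x y = ((fst x + fst y) div 2, (snd x + snd y) div 2)"

text \<open>U(1) connection on G_N with flux alpha through every upright unit triangle and
beta through every downright unit triangle (holonomy along the counterclockwise
cycle).  An upright unit triangle c, c+(1,0), c+(0,1) is traversed
counterclockwise in this order; a downright unit triangle has corners
c+(1,0) (bottom), c+(1,1), c+(0,1), traversed counterclockwise in this order.\<close>
definition flux_connection ::
  "nat \<Rightarrow> real \<Rightarrow> real \<Rightarrow> (vtx \<Rightarrow> vtx \<Rightarrow> complex) \<Rightarrow> bool" where
  "flux_connection n \<alpha> \<beta> \<omega> \<longleftrightarrow>
     (\<forall>x y. sg_adj n x y \<longrightarrow> norm (\<omega> x y) = 1 \<and> \<omega> y x = cnj (\<omega> x y)) \<and>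
     (\<forall>c\<in>sg_offs n.
        \<omega> c (padd c (1,0)) * \<omega> (padd c (1,0)) (padd c (0,1)) * \<omega> (padd c (0,1)) c
          = exp (2 * pi * \<i> * complex_of_real \<alpha>)) \<and>
     (\<forall>c. let p = padd c (1,0); r = padd c (1,1); q = padd c (0,1) in
        sg_adj n p r \<and> sg_adj n r q \<and> sg_adj n q p \<longrightarrow>
        \<omega> p r * \<omega> r q * \<omega> q p = exp (2 * pi * \<i> * complex_of_real \<beta>))"

definition mag_lap :: "nat \<Rightarrow> (vtx \<Rightarrow> vtx \<Rightarrow> complex) \<Rightarrow> vtx \<Rightarrow> vtx \<Rightarrow> complex" where
  "mag_lap n \<omega> x y =
     (if x = y then 1
      else if sg_adj n x y then (if x \<in> sg_V0 n then - (1/2) else - (1/4)) * \<omega> x y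
      else 0)"

definition inverse_on :: "'a set \<Rightarrow> ('a \<Rightarrow> 'a \<Rightarrow> complex) \<Rightarrow> ('a \<Rightarrow> 'a \<Rightarrow> complex) \<Rightarrow> bool" where
  "inverse_on W M Minv \<longleftrightarrow>
     (\<forall>x\<in>W. \<forall>y\<in>W. (\<Sum>z\<in>W. M x z * Minv z y) = (if x = y then 1 else 0)) \<and>
     (\<forall>x\<in>W. \<forall>y\<in>W. (\<Sum>z\<in>W. Minv x z * M z y) = (if x = y then 1 else 0))"

text \<open>The block D - lambda I of L - lambda I on V_N \ V_{N-1}.\<close>
definition shifted_block :: "nat \<Rightarrow> (vtx \<Rightarrow> vtx \<Rightarrow> complex) \<Rightarrow> real \<Rightarrow> vtx \<Rightarrow> vtx \<Rightarrow> complex" where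
  "shifted_block n \<omega> lam x y = mag_lap n \<omega> x y - (if x = y then complex_of_real lam else 0)"

definition schur :: "nat \<Rightarrow> (vtx \<Rightarrow> vtx \<Rightarrow> complex) \<Rightarrow> real \<Rightarrow> (vtx \<Rightarrow> vtx \<Rightarrow> complex)
    \<Rightarrow> vtx \<Rightarrow> vtx \<Rightarrow> complex" where
  "schur n \<omega> lam Dinv x y =
     shifted_block n \<omega> lam x y
     - (\<Sum>u\<in>sg_V n - sg_Vnest n. \<Sum>v\<in>sg_V n - sg_Vnest n.
          mag_lap n \<omega> x u * Dinv u v * mag_lap n \<omega> v y)"

definition A_fun :: "real \<Rightarrow> real \<Rightarrow> real \<Rightarrow> real" where
  "A_fun \<alpha> \<beta> lam = 16 * lam^2 - (32 + 4 * cos (2*pi*\<alpha>)) * lam + 15 + 4 * cos (2*pi*\<alpha>)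
      + cos (2*pi*(\<alpha> + \<beta>))"

definition D_fun :: "real \<Rightarrow> real \<Rightarrow> real" where
  "D_fun \<beta> lam = - (lam ^ 3) + 3 * lam ^ 2 - 45/16 * lam + 13/16 - 1/32 * cos (2*pi*\<beta>)"

definition Psi_fun :: "real \<Rightarrow> real \<Rightarrow> real \<Rightarrow> complex" where
  "Psi_fun \<alpha> \<beta> lam =
     (1 - lam)^2 - 1/16
     + (1 - lam)/4 * (2 * exp (- 2 * pi * \<i> * \<alpha>) + exp (- 2 * pi * \<i> * (2 * \<alpha> + \<beta>)))
     + 1/16 * (exp (- 4 * pi * \<i> * \<alpha>) + 2 * exp (- 2 * pi * \<i> * (\<alpha> + \<beta>)))"

end

(*
  The vertices of V_N \ V_(N-1) are the midpoints of the edges of the level-(N-1) cells, three per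
  cell, and two of them are adjacent only if they belong to the same cell. Hence D - lambda I is
  block diagonal with one 3 x 3 block per cell, every block has determinant D(beta, lambda), and
  D - lambda I is inverted blockwise by adjugates. The Schur complement entry at (a_i, a_j) is then
  A - lambda I minus a sum, over the cells containing a_i and a_j, of an explicit expression in the
  link variables of a single level-1 gasket. Fixing the gauge on that gasket, the expression depends
  only on the fluxes and yields A, Psi or its conjugate. On the diagonal, a vertex of V_0 lies in one
  cell and carries Laplacian weight 1/2, every other vertex lies in two cells with weight 1/4, so
  both kinds of vertices get the same value.
*)

theory Submission
  imports Defs
begin

lemma less_3_cases: "(k::nat) < 3 \<Longrightarrow> k = 0 \<or> k = 1 \<or> k = 2"
  by auto

lemma lessThan_3: "{..<3::nat} = {0, 1, 2}"
  by auto

lemma ex_less_3: "(\<exists>i<3. P i) \<longleftrightarrow> P 0 \<or> P 1 \<or> P (2::nat)"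
  unfolding numeral_3_eq_3 by (simp add: Ex_less_Suc2 numeral_2_eq_2)

lemma sum_lessThan_3: "(\<Sum>k<3. f k) = f 0 + f 1 + f (2::nat)"
  by (simp add: numeral_3_eq_3 numeral_2_eq_2)

definition next3 :: "nat \<Rightarrow> nat" where
  "next3 i = (if i = 2 then 0 else i + 1)"

definition prev3 :: "nat \<Rightarrow> nat" where
  "prev3 i = (if i = 0 then 2 else i - 1)"

lemma next3_less [simp]: "i < 3 \<Longrightarrow> next3 i < 3"
  and prev3_less [simp]: "i < 3 \<Longrightarrow> prev3 i < 3"
  by (auto simp: next3_def prev3_def)

lemma next3_simps: "next3 0 = 1" "next3 1 = 2" "next3 2 = 0"
  and prev3_simps: "prev3 0 = 2" "prev3 1 = 0" "prev3 2 = 1"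
  by (simp_all add: next3_def prev3_def)

definition corner_mid_adj :: "nat \<Rightarrow> nat \<Rightarrow> bool" where
  "corner_mid_adj i k \<longleftrightarrow> k = i \<or> k = prev3 i"

section \<open>Block-diagonal inverses and 3 x 3 adjugates\<close>

lemma inverse_on_reindex:
  assumes f: "bij_betw f P W" and inv: "inverse_on W M Minv"
  shows "inverse_on P (\<lambda>p q. M (f p) (f q)) (\<lambda>p q. Minv (f p) (f q))"
proof -
  have sum_W: "(\<Sum>r\<in>P. M (f p) (f r) * Minv (f r) (f q)) = (\<Sum>z\<in>W. M (f p) z * Minv z (f q))"
    "(\<Sum>r\<in>P. Minv (f p) (f r) * M (f r) (f q)) = (\<Sum>z\<in>W. Minv (f p) z * M z (f q))" for p q
    using sum.reindex_bij_betw[OF f, of "\<lambda>z. M (f p) z * Minv z (f q)"]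
      sum.reindex_bij_betw[OF f, of "\<lambda>z. Minv (f p) z * M z (f q)"] by simp_all
  have "f p \<in> W" "f p = f q \<longleftrightarrow> p = q" if "p \<in> P" "q \<in> P" for p q
    using f that by (auto simp: bij_betw_def inj_on_def)
  with inv show ?thesis
    unfolding inverse_on_def sum_W by auto
qed

lemma inverse_on_unique:
  assumes "finite W" and inv: "inverse_on W M Minv"
    and right: "\<And>x y. x \<in> W \<Longrightarrow> y \<in> W \<Longrightarrow> (\<Sum>z\<in>W. M x z * R z y) = (if x = y then 1 else 0)"
    and "x \<in> W" "y \<in> W"
  shows "Minv x y = R x y"
proof -
  have "Minv x y = (\<Sum>z\<in>W. if z = y then Minv x z else 0)"
    using assms(1,5) by simp
  also have "\<dots> = (\<Sum>z\<in>W. Minv x z * (\<Sum>u\<in>W. M z u * R u y))"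
    using assms(5) by (intro sum.cong) (simp_all add: right)
  also have "\<dots> = (\<Sum>z\<in>W. \<Sum>u\<in>W. Minv x z * M z u * R u y)"
    by (simp add: sum_distrib_left mult.assoc)
  also have "\<dots> = (\<Sum>u\<in>W. (\<Sum>z\<in>W. Minv x z * M z u) * R u y)"
    by (subst sum.swap) (simp add: sum_distrib_right)
  also have "\<dots> = (\<Sum>u\<in>W. if x = u then R u y else 0)"
    using inv assms(4) by (intro sum.cong) (simp_all add: inverse_on_def)
  also have "\<dots> = R x y"
    using assms(1,4) by simp
  finally show ?thesis .
qed

lemma block_diagonal_row_sum:
  fixes M :: "'c \<times> 'k \<Rightarrow> 'c \<times> 'k \<Rightarrow> complex"
  assumes "finite S" "c \<in> S" "k \<in> K"
    and off: "\<And>c c' k k'. c \<in> S \<Longrightarrow> c' \<in> S \<Longrightarrow> k \<in> K \<Longrightarrow> k' \<in> K \<Longrightarrow> c' \<noteq> c \<Longrightarrow>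
      M (c, k) (c', k') = 0"
  shows "(\<Sum>(d, j)\<in>S \<times> K. M (c, k) (d, j) * g d j) = (\<Sum>j\<in>K. M (c, k) (c, j) * g c j)"
proof -
  have "(\<Sum>(d, j)\<in>S \<times> K. M (c, k) (d, j) * g d j) = (\<Sum>d\<in>S. \<Sum>j\<in>K. M (c, k) (d, j) * g d j)"
    by (simp add: sum.cartesian_product)
  also have "\<dots> = (\<Sum>d\<in>S. if d = c then \<Sum>j\<in>K. M (c, k) (c, j) * g c j else 0)"
    using assms(2,3) by (intro sum.cong refl) (auto simp: off)
  also have "\<dots> = (\<Sum>j\<in>K. M (c, k) (c, j) * g c j)"
    using assms(1,2) by (simp add: sum.delta')
  finally show ?thesis .
qed

lemma block_diagonal_right_inverse:
  fixes M :: "'c \<times> 'k \<Rightarrow> 'c \<times> 'k \<Rightarrow> complex"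
  assumes "finite S"
    and off: "\<And>c c' k k'. c \<in> S \<Longrightarrow> c' \<in> S \<Longrightarrow> k \<in> K \<Longrightarrow> k' \<in> K \<Longrightarrow> c' \<noteq> c \<Longrightarrow>
      M (c, k) (c', k') = 0"
    and block: "\<And>c k k'. c \<in> S \<Longrightarrow> k \<in> K \<Longrightarrow> k' \<in> K \<Longrightarrow>
      (\<Sum>j\<in>K. M (c, k) (c, j) * R c j k') = (if k = k' then 1 else 0)"
    and "p \<in> S \<times> K" "q \<in> S \<times> K"
  shows "(\<Sum>(d, j)\<in>S \<times> K. M p (d, j) * (if d = fst q then R d j (snd q) else 0)) =
    (if p = q then 1 else 0)"
proof -
  obtain c k c' k' where pq: "p = (c, k)" "q = (c', k')" "c \<in> S" "k \<in> K" "c' \<in> S" "k' \<in> K"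
    using assms(4,5) by auto
  have "(\<Sum>(d, j)\<in>S \<times> K. M p (d, j) * (if d = fst q then R d j (snd q) else 0)) =
      (\<Sum>j\<in>K. M (c, k) (c, j) * (if c = fst q then R c j (snd q) else 0))"
    unfolding pq(1) using assms(1) pq(3,4) off by (rule block_diagonal_row_sum)
  also have "\<dots> = (if p = q then 1 else 0)"
    using block[OF pq(3,4,6)] by (cases "c = c'") (auto simp: pq(1,2))
  finally show ?thesis .
qed

lemma block_diagonal_inverse_block:
  fixes M :: "'c \<times> 'k \<Rightarrow> 'c \<times> 'k \<Rightarrow> complex"
  assumes "finite S" and inv: "inverse_on (S \<times> K) M Minv"
    and off: "\<And>c c' k k'. c \<in> S \<Longrightarrow> c' \<in> S \<Longrightarrow> k \<in> K \<Longrightarrow> k' \<in> K \<Longrightarrow> c' \<noteq> c \<Longrightarrow>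
      M (c, k) (c', k') = 0"
    and "c \<in> S" "k \<in> K" "k' \<in> K"
  shows "(\<Sum>j\<in>K. M (c, k) (c, j) * Minv (c, j) (c, k')) = (if k = k' then 1 else 0)"
proof -
  have "(\<Sum>j\<in>K. M (c, k) (c, j) * Minv (c, j) (c, k')) =
      (\<Sum>(d, j)\<in>S \<times> K. M (c, k) (d, j) * Minv (d, j) (c, k'))"
    using assms(1,4,5) off by (rule block_diagonal_row_sum[symmetric])
  also have "\<dots> = (\<Sum>r\<in>S \<times> K. M (c, k) r * Minv r (c, k'))"
    by (simp add: case_prod_beta')
  also have "\<dots> = (if k = k' then 1 else 0)"
    using inv assms(4-6) by (simp add: inverse_on_def)
  finally show ?thesis .
qed

definition det3 :: "(nat \<Rightarrow> nat \<Rightarrow> complex) \<Rightarrow> complex" where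
  "det3 M = M 0 0 * M 1 1 * M 2 2 + M 0 1 * M 1 2 * M 2 0 + M 0 2 * M 1 0 * M 2 1
          - M 0 2 * M 1 1 * M 2 0 - M 0 1 * M 1 0 * M 2 2 - M 0 0 * M 1 2 * M 2 1"

definition adj3 :: "(nat \<Rightarrow> nat \<Rightarrow> complex) \<Rightarrow> nat \<Rightarrow> nat \<Rightarrow> complex" where
  "adj3 M i j =
    (if i = 0 then
       (if j = 0 then M 1 1 * M 2 2 - M 1 2 * M 2 1
        else if j = 1 then M 0 2 * M 2 1 - M 0 1 * M 2 2
        else M 0 1 * M 1 2 - M 0 2 * M 1 1)
     else if i = 1 then
       (if j = 0 then M 1 2 * M 2 0 - M 1 0 * M 2 2
        else if j = 1 then M 0 0 * M 2 2 - M 0 2 * M 2 0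
        else M 0 2 * M 1 0 - M 0 0 * M 1 2)
     else
       (if j = 0 then M 1 0 * M 2 1 - M 1 1 * M 2 0
        else if j = 1 then M 0 1 * M 2 0 - M 0 0 * M 2 1
        else M 0 0 * M 1 1 - M 0 1 * M 1 0))"

lemma det3_mult: "det3 (\<lambda>i j. \<Sum>k<3. A i k * B k j) = det3 A * det3 B"
  unfolding det3_def sum_lessThan_3 by (simp add: algebra_simps)

lemma mult_adj3:
  "i < 3 \<Longrightarrow> j < 3 \<Longrightarrow> (\<Sum>k<3. A i k * adj3 A k j) = (if i = j then det3 A else 0)"
  unfolding sum_lessThan_3
  by (auto simp: less_Suc_eq numeral_3_eq_3 numeral_2_eq_2 adj3_def det3_def algebra_simps)

lemma det3_nonzero_if_right_inverse:
  assumes "\<And>i j. i < 3 \<Longrightarrow> j < 3 \<Longrightarrow> (\<Sum>k<3. A i k * B k j) = (if i = j then 1 else 0)"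
  shows "det3 A \<noteq> 0"
proof -
  have "det3 A * det3 B = 1"
    unfolding det3_mult[symmetric] by (simp add: det3_def assms)
  then show ?thesis
    by auto
qed

section \<open>The level-1 gasket with magnetic fluxes\<close>

(* A_fun, D_fun and Psi_fun with exp (2 pi i alpha) and exp (2 pi i beta) replaced by E and F. *)
definition A_poly :: "complex \<Rightarrow> complex \<Rightarrow> complex \<Rightarrow> complex" where
  "A_poly E F lam =
     16 * lam^2 - (32 + 2 * (E + 1/E)) * lam + 15 + 2 * (E + 1/E) + (E * F + 1 / (E * F)) / 2"

definition D_poly :: "complex \<Rightarrow> complex \<Rightarrow> complex" where
  "D_poly F lam = - (lam ^ 3) + 3 * lam ^ 2 - 45/16 * lam + 13/16 - (F + 1/F) / 64"

definition Psi_poly :: "complex \<Rightarrow> complex \<Rightarrow> complex \<Rightarrow> complex" where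
  "Psi_poly E F lam = (1 - lam)^2 - 1/16 + (1 - lam)/4 * (2 / E + 1 / (E^2 * F))
     + 1/16 * (1 / E^2 + 2 / (E * F))"

lemma exp_2pi_i_eq_cis: "exp (complex_of_real (2 * pi) * \<i> * complex_of_real x) = cis (2 * pi * x)"
  by (simp add: cis_conv_exp mult.commute mult.left_commute)

lemma of_real_cos_cis: "complex_of_real (cos x) = (cis x + 1 / cis x) / 2"
  by (simp add: complex_eq_iff inverse_eq_divide[symmetric])

lemma A_fun_eq: "complex_of_real (A_fun \<alpha> \<beta> lam) = A_poly (cis (2*pi*\<alpha>)) (cis (2*pi*\<beta>)) (of_real lam)"
proof -
  have "cis (2*pi*(\<alpha> + \<beta>)) = cis (2*pi*\<alpha>) * cis (2*pi*\<beta>)"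
    by (simp add: cis_mult distrib_left)
  then have cos_sum: "complex_of_real (cos (2*pi*(\<alpha> + \<beta>))) =
      (cis (2*pi*\<alpha>) * cis (2*pi*\<beta>) + 1 / (cis (2*pi*\<alpha>) * cis (2*pi*\<beta>))) / 2"
    by (simp only: of_real_cos_cis)
  show ?thesis
    unfolding A_fun_def A_poly_def of_real_add of_real_diff of_real_mult of_real_power of_real_numeral
      cos_sum of_real_cos_cis[of "2*pi*\<alpha>"]
    by (simp add: field_simps)
qed

lemma D_fun_eq: "complex_of_real (D_fun \<beta> lam) = D_poly (cis (2*pi*\<beta>)) (of_real lam)"
  unfolding D_fun_def D_poly_def of_real_add of_real_diff of_real_mult of_real_power of_real_numeral
    of_real_minus of_real_divide of_real_cos_cis[of "2*pi*\<beta>"]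
  by (simp add: field_simps)

lemma Psi_fun_eq: "Psi_fun \<alpha> \<beta> lam = Psi_poly (cis (2*pi*\<alpha>)) (cis (2*pi*\<beta>)) (of_real lam)"
proof -
  define X where "X = complex_of_real (2 * pi) * \<i> * complex_of_real \<alpha>"
  define Y where "Y = complex_of_real (2 * pi) * \<i> * complex_of_real \<beta>"
  have "complex_of_real (- 2 * pi) * \<i> * complex_of_real \<alpha> = - X"
    "complex_of_real (- 2 * pi) * \<i> * (2 * complex_of_real \<alpha> + complex_of_real \<beta>) = - (X + X + Y)"
    "complex_of_real (- 4 * pi) * \<i> * complex_of_real \<alpha> = - (X + X)"
    "complex_of_real (- 2 * pi) * \<i> * (complex_of_real \<alpha> + complex_of_real \<beta>) = - (X + Y)"
    unfolding X_def Y_def by (simp_all add: algebra_simps)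
  moreover have "cis (2*pi*\<alpha>) = exp X" "cis (2*pi*\<beta>) = exp Y"
    unfolding X_def Y_def exp_2pi_i_eq_cis by (rule refl)+
  ultimately show ?thesis
    unfolding Psi_fun_def Psi_poly_def
    by (simp only: exp_minus exp_add inverse_eq_divide) (simp add: field_simps power2_eq_square)
qed

lemma cnj_Psi_poly: "cnj (Psi_poly E F (of_real lam)) = Psi_poly (cnj E) (cnj F) (of_real lam)"
  by (simp add: Psi_poly_def)

lemma cnj_cis_eq: "cnj (cis x) = 1 / cis x"
  by (simp add: cis_cnj inverse_eq_divide[symmetric])

(* A level-1 gasket with corners A i and edge midpoints B k, indexed as cell_corner and cell_mid
   below; E is the flux through each upright triangle A i, B i, B (prev3 i), and F the flux through
   the downright triangle B 0, B 1, B 2. *)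
definition level1_flux ::
    "('a \<Rightarrow> 'a \<Rightarrow> complex) \<Rightarrow> (nat \<Rightarrow> 'a) \<Rightarrow> (nat \<Rightarrow> 'a) \<Rightarrow> complex \<Rightarrow> complex \<Rightarrow> bool" where
  "level1_flux \<omega> A B E F \<longleftrightarrow>
     (\<forall>i<3. \<forall>k<3. corner_mid_adj i k \<longrightarrow>
        norm (\<omega> (A i) (B k)) = 1 \<and> \<omega> (B k) (A i) = cnj (\<omega> (A i) (B k))) \<and>
     (\<forall>k<3. \<forall>k'<3. k \<noteq> k' \<longrightarrow> norm (\<omega> (B k) (B k')) = 1 \<and> \<omega> (B k') (B k) = cnj (\<omega> (B k) (B k'))) \<and>
     (\<forall>i<3. \<omega> (A i) (B i) * \<omega> (B i) (B (prev3 i)) * \<omega> (B (prev3 i)) (A i) = E) \<and>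
     \<omega> (B 0) (B 1) * \<omega> (B 1) (B 2) * \<omega> (B 2) (B 0) = F"

lemma cnj_unit:
  assumes "norm z = 1"
  shows "cnj z = 1 / z"
proof -
  have "z * cnj z = 1"
    using complex_norm_square[of z] assms by simp
  moreover have "z \<noteq> 0"
    using assms by auto
  ultimately show ?thesis
    by (simp add: field_simps)
qed

lemma level1_flux_inverse_links:
  assumes "level1_flux \<omega> A B E F"
  shows "i < 3 \<Longrightarrow> k < 3 \<Longrightarrow> corner_mid_adj i k \<Longrightarrow>
      \<omega> (A i) (B k) \<noteq> 0 \<and> \<omega> (B k) (A i) = 1 / \<omega> (A i) (B k)"
    and "k < 3 \<Longrightarrow> k' < 3 \<Longrightarrow> k \<noteq> k' \<Longrightarrow>
      \<omega> (B k) (B k') \<noteq> 0 \<and> \<omega> (B k') (B k) = 1 / \<omega> (B k) (B k')"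
proof -
  have AB: "\<forall>i<3. \<forall>k<3. corner_mid_adj i k \<longrightarrow>
        norm (\<omega> (A i) (B k)) = 1 \<and> \<omega> (B k) (A i) = cnj (\<omega> (A i) (B k))"
    and BB: "\<forall>k<3. \<forall>k'<3. k \<noteq> k' \<longrightarrow> norm (\<omega> (B k) (B k')) = 1 \<and> \<omega> (B k') (B k) = cnj (\<omega> (B k) (B k'))"
    using assms unfolding level1_flux_def by blast+
  show "\<omega> (A i) (B k) \<noteq> 0 \<and> \<omega> (B k) (A i) = 1 / \<omega> (A i) (B k)"
    if "i < 3" "k < 3" "corner_mid_adj i k"
    using AB[rule_format, OF that] cnj_unit by auto
  show "\<omega> (B k) (B k') \<noteq> 0 \<and> \<omega> (B k') (B k) = 1 / \<omega> (B k) (B k')"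
    if "k < 3" "k' < 3" "k \<noteq> k'"
    using BB[rule_format, OF that] cnj_unit by auto
qed

lemma level1_flux_links:
  assumes "level1_flux \<omega> A B E F"
  defines "u0 \<equiv> \<omega> (A 0) (B 0)" and "u2 \<equiv> \<omega> (B 2) (A 0)" and "v0 \<equiv> \<omega> (B 0) (A 1)"
    and "v1 \<equiv> \<omega> (A 1) (B 1)" and "w1 \<equiv> \<omega> (B 1) (A 2)" and "w2 \<equiv> \<omega> (A 2) (B 2)"
  shows "u0 \<noteq> 0" "u2 \<noteq> 0" "v0 \<noteq> 0" "v1 \<noteq> 0" "w1 \<noteq> 0" "w2 \<noteq> 0" "E \<noteq> 0"
    and "\<omega> (B 0) (A 0) = 1 / u0" "\<omega> (A 0) (B 2) = 1 / u2" "\<omega> (A 1) (B 0) = 1 / v0"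
      "\<omega> (B 1) (A 1) = 1 / v1" "\<omega> (A 2) (B 1) = 1 / w1" "\<omega> (B 2) (A 2) = 1 / w2"
      "\<omega> (B 0) (B 1) = v0 * v1 / E" "\<omega> (B 1) (B 0) = E / (v0 * v1)"
      "\<omega> (B 1) (B 2) = w1 * w2 / E" "\<omega> (B 2) (B 1) = E / (w1 * w2)"
      "\<omega> (B 2) (B 0) = u0 * u2 / E" "\<omega> (B 0) (B 2) = E / (u0 * u2)"
      "F = v0 * v1 / E * (w1 * w2 / E) * (u0 * u2 / E)"
proof -
  note AB = level1_flux_inverse_links(1)[OF assms(1)]
  note BB = level1_flux_inverse_links(2)[OF assms(1)]
  have adj: "corner_mid_adj 0 0" "corner_mid_adj 0 2" "corner_mid_adj 1 0" "corner_mid_adj 1 1"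
    "corner_mid_adj 2 1" "corner_mid_adj 2 2"
    by (simp_all add: corner_mid_adj_def prev3_def)
  note AB' = AB[OF _ _ adj(1)] AB[OF _ _ adj(2)] AB[OF _ _ adj(3)] AB[OF _ _ adj(4)]
    AB[OF _ _ adj(5)] AB[OF _ _ adj(6)]
  show AB_links: "\<omega> (B 0) (A 0) = 1 / u0" "\<omega> (A 0) (B 2) = 1 / u2" "\<omega> (A 1) (B 0) = 1 / v0"
      "\<omega> (B 1) (A 1) = 1 / v1" "\<omega> (A 2) (B 1) = 1 / w1" "\<omega> (B 2) (A 2) = 1 / w2"
    and nz: "u0 \<noteq> 0" "u2 \<noteq> 0" "v0 \<noteq> 0" "v1 \<noteq> 0" "w1 \<noteq> 0" "w2 \<noteq> 0"
    using AB' by (simp_all add: u0_def u2_def v0_def v1_def w1_def w2_def)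
  have up: "\<forall>i<3. \<omega> (A i) (B i) * \<omega> (B i) (B (prev3 i)) * \<omega> (B (prev3 i)) (A i) = E"
    and down: "\<omega> (B 0) (B 1) * \<omega> (B 1) (B 2) * \<omega> (B 2) (B 0) = F"
    using assms unfolding level1_flux_def by blast+
  have flux: "u0 * \<omega> (B 0) (B 2) * u2 = E" "v1 * \<omega> (B 1) (B 0) * v0 = E" "w2 * \<omega> (B 2) (B 1) * w1 = E"
    using up[rule_format, of 0] up[rule_format, of 1] up[rule_format, of 2]
    by (simp_all add: prev3_def u0_def u2_def v0_def v1_def w1_def w2_def)
  show E: "E \<noteq> 0"
    using flux(1) nz BB[of 0 2] by auto
  have solve: "b = E / (a * c)" if "a * b * c = E" "a \<noteq> 0" "c \<noteq> 0" for a b c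
    using that by (auto simp: field_simps)
  show mid: "\<omega> (B 0) (B 2) = E / (u0 * u2)" "\<omega> (B 1) (B 0) = E / (v0 * v1)"
    "\<omega> (B 2) (B 1) = E / (w1 * w2)"
    using solve[OF flux(1)] solve[OF flux(2)] solve[OF flux(3)] nz by (simp_all add: mult.commute)
  show mid': "\<omega> (B 2) (B 0) = u0 * u2 / E" "\<omega> (B 0) (B 1) = v0 * v1 / E" "\<omega> (B 1) (B 2) = w1 * w2 / E"
    using BB[of 0 2] BB[of 1 0] BB[of 2 1] mid by simp_all
  show "F = v0 * v1 / E * (w1 * w2 / E) * (u0 * u2 / E)"
    unfolding down[symmetric] mid' ..
qed

definition corner_sum ::
    "(nat \<Rightarrow> nat \<Rightarrow> complex) \<Rightarrow> (nat \<Rightarrow> complex) \<Rightarrow> (nat \<Rightarrow> complex) \<Rightarrow> nat \<Rightarrow> nat \<Rightarrow> complex" where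
  "corner_sum Y r s i j =
     (\<Sum>k<3. \<Sum>k'<3. (if corner_mid_adj i k then r k else 0) * Y k k' *
        (if corner_mid_adj j k' then s k' else 0))"

context
  fixes \<omega> :: "'a \<Rightarrow> 'a \<Rightarrow> complex" and A B :: "nat \<Rightarrow> 'a" and E F lam :: complex
    and X :: "nat \<Rightarrow> nat \<Rightarrow> complex"
  assumes flux: "level1_flux \<omega> A B E F"
    and X: "\<And>k k'. k < 3 \<Longrightarrow> k' < 3 \<Longrightarrow> X k k' = (if k = k' then 1 - lam else - \<omega> (B k) (B k') / 4)"
begin

lemma level1_block_entries:
  "X 0 0 = 1 - lam" "X 1 1 = 1 - lam" "X 2 2 = 1 - lam"
  "X 0 1 = - (\<omega> (B 0) (A 1) * \<omega> (A 1) (B 1) / E) / 4" "X 1 0 = - (E / (\<omega> (B 0) (A 1) * \<omega> (A 1) (B 1))) / 4"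
  "X 1 2 = - (\<omega> (B 1) (A 2) * \<omega> (A 2) (B 2) / E) / 4" "X 2 1 = - (E / (\<omega> (B 1) (A 2) * \<omega> (A 2) (B 2))) / 4"
  "X 2 0 = - (\<omega> (A 0) (B 0) * \<omega> (B 2) (A 0) / E) / 4" "X 0 2 = - (E / (\<omega> (A 0) (B 0) * \<omega> (B 2) (A 0))) / 4"
  using X[of 0 0] X[of 1 1] X[of 2 2] X[of 0 1] X[of 1 0] X[of 1 2] X[of 2 1] X[of 2 0] X[of 0 2]
  by (simp_all only: level1_flux_links(14-19)[OF flux]) simp_all

lemma level1_det: "det3 X = D_poly F lam"
proof -
  define u0 u2 v0 v1 w1 w2 where "u0 = \<omega> (A 0) (B 0)" and "u2 = \<omega> (B 2) (A 0)"
    and "v0 = \<omega> (B 0) (A 1)" and "v1 = \<omega> (A 1) (B 1)" and "w1 = \<omega> (B 1) (A 2)" and "w2 = \<omega> (A 2) (B 2)"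
  note links = level1_flux_links[OF flux, folded u0_def u2_def v0_def v1_def w1_def w2_def]
  note Xv = level1_block_entries[folded u0_def u2_def v0_def v1_def w1_def w2_def]
  show ?thesis
    unfolding det3_def D_poly_def Xv links(20) using links(1-7)
    by (simp add: field_simps) (simp add: algebra_simps eval_nat_numeral)
qed

lemma level1_corner_sums:
  assumes "i < 3"
  shows "corner_sum (adj3 X) (\<lambda>k. \<omega> (A i) (B k)) (\<lambda>k. \<omega> (B k) (A i)) i i = A_poly E F lam / 8"
    and "corner_sum (adj3 X) (\<lambda>k. \<omega> (A i) (B k)) (\<lambda>k. \<omega> (B k) (A (next3 i))) i (next3 i) =
      Psi_poly E F lam * \<omega> (A i) (B i) * \<omega> (B i) (A (next3 i))"
    and "corner_sum (adj3 X) (\<lambda>k. \<omega> (A (next3 i)) (B k)) (\<lambda>k. \<omega> (B k) (A i)) (next3 i) i =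
      Psi_poly (1 / E) (1 / F) lam * \<omega> (A (next3 i)) (B i) * \<omega> (B i) (A i)"
proof -
  define u0 u2 v0 v1 w1 w2 where "u0 = \<omega> (A 0) (B 0)" and "u2 = \<omega> (B 2) (A 0)"
    and "v0 = \<omega> (B 0) (A 1)" and "v1 = \<omega> (A 1) (B 1)" and "w1 = \<omega> (B 1) (A 2)" and "w2 = \<omega> (A 2) (B 2)"
  note links = level1_flux_links[OF flux, folded u0_def u2_def v0_def v1_def w1_def w2_def]
  note Xv = level1_block_entries[folded u0_def u2_def v0_def v1_def w1_def w2_def]
  (* Substitute with simp only first: simp rewrites the index 1 to Suc 0, after which the
     equations for X 1 _ and for the links at A 1, B 1 no longer match. *)
  note expand = corner_sum_def sum_lessThan_3 corner_mid_adj_def prev3_simps next3_simps adj3_def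
    Xv links(8-13) u0_def[symmetric] u2_def[symmetric] v0_def[symmetric] v1_def[symmetric]
    w1_def[symmetric] w2_def[symmetric]
  show "corner_sum (adj3 X) (\<lambda>k. \<omega> (A i) (B k)) (\<lambda>k. \<omega> (B k) (A i)) i i = A_poly E F lam / 8"
    using less_3_cases[OF assms] links(1-7)
    by (elim disjE; simp only: expand; simp add: A_poly_def links(20);
        simp add: field_simps; simp add: algebra_simps eval_nat_numeral)
  show "corner_sum (adj3 X) (\<lambda>k. \<omega> (A i) (B k)) (\<lambda>k. \<omega> (B k) (A (next3 i))) i (next3 i) =
      Psi_poly E F lam * \<omega> (A i) (B i) * \<omega> (B i) (A (next3 i))"
    using less_3_cases[OF assms] links(1-7)
    by (elim disjE; simp only: expand; simp add: Psi_poly_def links(20);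
        simp add: field_simps; simp add: algebra_simps eval_nat_numeral)
  show "corner_sum (adj3 X) (\<lambda>k. \<omega> (A (next3 i)) (B k)) (\<lambda>k. \<omega> (B k) (A i)) (next3 i) i =
      Psi_poly (1 / E) (1 / F) lam * \<omega> (A (next3 i)) (B i) * \<omega> (B i) (A i)"
    using less_3_cases[OF assms] links(1-7)
    by (elim disjE; simp only: expand; simp add: Psi_poly_def links(20);
        simp add: field_simps; simp add: algebra_simps eval_nat_numeral)
qed

end

section \<open>Cells of the nested gasket\<close>

lemma padd_Pair [simp]: "padd (a, b) (c, d) = (a + c, b + d)"
  by (simp add: padd_def)

lemma pscale_Pair [simp]: "pscale k (a, b) = (k * a, k * b)"
  by (simp add: pscale_def)

declare sg_offs.simps(2) [simp del]

lemma mem_padd_image: "(p, q) \<in> padd (u, v) ` X \<longleftrightarrow> (p - u, q - v) \<in> X"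
  by (force simp: image_iff)

lemma mem_sg_offs_Suc:
  "(x, y) \<in> sg_offs (Suc n) \<longleftrightarrow>
     (x, y) \<in> sg_offs n \<or> (x - 2^n, y) \<in> sg_offs n \<or> (x, y - 2^n) \<in> sg_offs n"
  by (simp add: sg_offs.simps(2) mem_padd_image)

lemma sg_offs_bounds: "(i, j) \<in> sg_offs n \<Longrightarrow> 0 \<le> i \<and> 0 \<le> j \<and> i + j < 2^n"
  by (induction n arbitrary: i j) (force simp: mem_sg_offs_Suc)+

lemma finite_sg_offs: "finite (sg_offs n)"
  by (induction n) (simp_all add: sg_offs.simps(2))

lemma corners_in_sg_offs: "(0, 0) \<in> sg_offs n" "(2^n - 1, 0) \<in> sg_offs n" "(0, 2^n - 1) \<in> sg_offs n"
  by (induction n) (simp_all add: mem_sg_offs_Suc)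

definition child_off :: "vtx \<Rightarrow> nat \<Rightarrow> vtx" where
  "child_off c i = padd (pscale 2 c) (if i = 0 then (0, 0) else if i = 1 then (1, 0) else (0, 1))"

lemma child_off_padd: "padd (2 * u, 2 * v) (child_off c i) = child_off (padd (u, v) c) i"
  by (cases c) (simp add: child_off_def algebra_simps)

lemma sg_offs_Suc_child_off: "sg_offs (Suc n) = (\<Union>c\<in>sg_offs n. child_off c ` {..<3})"
proof (induction n)
  case 0
  show ?case by (auto simp: sg_offs.simps(2) child_off_def lessThan_3)
next
  case (Suc n)
  have shift: "padd (2 * 2^n, 0) ` child_off c ` {..<3} = child_off (padd (2^n, 0) c) ` {..<3}"
    "padd (0, 2 * 2^n) ` child_off c ` {..<3} = child_off (padd (0, 2^n) c) ` {..<3}" for c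
    using child_off_padd[of "2^n" 0] child_off_padd[of 0 "2^n"] by (auto simp: image_image)
  have "sg_offs (Suc (Suc n)) = (\<Union>c\<in>sg_offs n. child_off c ` {..<3}) \<union>
      padd (2^Suc n, 0) ` (\<Union>c\<in>sg_offs n. child_off c ` {..<3}) \<union>
      padd (0, 2^Suc n) ` (\<Union>c\<in>sg_offs n. child_off c ` {..<3})"
    by (simp only: sg_offs.simps(2)[of "Suc n"] Suc.IH)
  also have "\<dots> = (\<Union>c\<in>sg_offs (Suc n). child_off c ` {..<3})"
    by (simp add: sg_offs.simps(2)[of n] image_UN shift UN_Un)
  finally show ?case .
qed

(* Corners 0, 1, 2 of the doubled cell c are listed counterclockwise, and midpoint k lies between
   corners k and next3 k; so corner i is adjacent to the midpoints i and prev3 i (corner_mid_adj). *)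
definition cell_corner :: "vtx \<Rightarrow> nat \<Rightarrow> vtx" where
  "cell_corner c i = pscale 2 (if i = 0 then c else if i = 1 then padd c (1, 0) else padd c (0, 1))"

definition cell_mid :: "vtx \<Rightarrow> nat \<Rightarrow> vtx" where
  "cell_mid c k = padd (pscale 2 c) (if k = 0 then (1, 0) else if k = 1 then (1, 1) else (0, 1))"

lemma up_tri_child_off:
  "i < 3 \<Longrightarrow> up_tri (child_off c i) 1 = {cell_corner c i, cell_mid c i, cell_mid c (prev3 i)}"
  by (cases c) (auto dest!: less_3_cases simp: up_tri_def child_off_def cell_corner_def cell_mid_def
      prev3_def insert_commute algebra_simps)

lemma cell_corner_image: "cell_corner c ` {..<3} = pscale 2 ` up_tri c 1"
  by (auto simp: lessThan_3 cell_corner_def up_tri_def)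

lemma cell_mid_ne_pscale [simp]:
  "cell_mid c k \<noteq> pscale 2 z" "pscale 2 z \<noteq> cell_mid c k"
  "cell_mid c k \<noteq> (2 * a, 2 * b)" "(2 * a, 2 * b) \<noteq> cell_mid c k"
proof -
  show ne: "cell_mid c k \<noteq> pscale 2 z" for z
    by (cases c, cases z) (auto simp: cell_mid_def, presburger+)
  then show "pscale 2 z \<noteq> cell_mid c k" "cell_mid c k \<noteq> (2 * a, 2 * b)" "(2 * a, 2 * b) \<noteq> cell_mid c k"
    by (metis pscale_Pair)+
qed

lemma cell_of_cell_mid: "(fst (cell_mid c k) div 2, snd (cell_mid c k) div 2) = c"
  by (cases c) (simp add: cell_mid_def)

lemma cell_mid_inj:
  assumes "k < 3" "k' < 3"
  shows "cell_mid c k = cell_mid c' k' \<longleftrightarrow> c = c' \<and> k = k'"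
proof
  assume eq: "cell_mid c k = cell_mid c' k'"
  then have "c = c'"
    by (metis cell_of_cell_mid)
  with eq assms show "c = c' \<and> k = k'"
    by (cases c) (auto dest!: less_3_cases simp: cell_mid_def)
qed simp

lemma cell_corner_inj: "i < 3 \<Longrightarrow> j < 3 \<Longrightarrow> cell_corner c i = cell_corner c j \<longleftrightarrow> i = j"
  by (cases c) (auto dest!: less_3_cases simp: cell_corner_def)

lemma sg_V_Suc_cells:
  "sg_V (Suc n) = (\<Union>c\<in>sg_offs n. cell_corner c ` {..<3} \<union> cell_mid c ` {..<3})"
proof -
  have cell: "(\<Union>i<3. up_tri (child_off c i) 1) = cell_corner c ` {..<3} \<union> cell_mid c ` {..<3}" for c
    by (auto simp: up_tri_child_off lessThan_3 prev3_def)
  have "sg_V (Suc n) = (\<Union>c\<in>sg_offs n. \<Union>i<3. up_tri (child_off c i) 1)"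
    unfolding sg_V_def sg_offs_Suc_child_off by blast
  also have "\<dots> = (\<Union>c\<in>sg_offs n. cell_corner c ` {..<3} \<union> cell_mid c ` {..<3})"
    by (simp only: cell)
  finally show ?thesis .
qed

lemma sg_adj_Suc:
  "sg_adj (Suc n) x y \<longleftrightarrow> x \<noteq> y \<and>
     (\<exists>c\<in>sg_offs n. \<exists>i<3. {x, y} \<subseteq> {cell_corner c i, cell_mid c i, cell_mid c (prev3 i)})"
proof -
  have "sg_adj (Suc n) x y \<longleftrightarrow> x \<noteq> y \<and> (\<exists>c\<in>sg_offs n. \<exists>i<3. {x, y} \<subseteq> up_tri (child_off c i) 1)"
    unfolding sg_adj_def sg_offs_Suc_child_off by blast
  then show ?thesis
    by (simp add: up_tri_child_off cong: conj_cong)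
qed

lemma cell_mid_ne_cell_corner [simp]:
  "cell_mid c k \<noteq> cell_corner d i" "cell_corner d i \<noteq> cell_mid c k"
  using cell_mid_ne_pscale(1) by (metis cell_corner_def)+

lemma inj_pscale2: "inj (pscale 2)"
  by (auto simp: inj_def pscale_def prod_eq_iff)

lemma pscale2_eq_cell_corner_iff: "(\<exists>i<3. pscale 2 z = cell_corner c i) \<longleftrightarrow> z \<in> up_tri c 1"
proof -
  have "(\<exists>i<3. pscale 2 z = cell_corner c i) \<longleftrightarrow> pscale 2 z \<in> pscale 2 ` up_tri c 1"
    unfolding cell_corner_image[symmetric] by auto
  then show ?thesis
    using inj_image_mem_iff[OF inj_pscale2] by simp
qed

lemma cell_corner_eq_pscale: "i < 3 \<Longrightarrow> \<exists>z\<in>up_tri c 1. cell_corner c i = pscale 2 z"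
  using cell_corner_image by blast

lemma cell_corner_adj_iff:
  "i < 3 \<Longrightarrow> (\<exists>j<3. cell_corner c i = cell_corner c j \<and> corner_mid_adj j k) \<longleftrightarrow> corner_mid_adj i k"
  using cell_corner_inj by blast

lemma sg_V0_Suc: "sg_V0 (Suc n) = pscale 2 ` sg_V0 n"
  by (simp add: sg_V0_def)

lemma cell_mid_notin_sg_V0 [simp]: "cell_mid c k \<notin> sg_V0 (Suc n)"
  unfolding sg_V0_Suc by (metis imageE cell_mid_ne_pscale(1))

lemma sg_V_Suc_split:
  "sg_V (Suc n) = sg_Vnest (Suc n) \<union> (\<lambda>(c, k). cell_mid c k) ` (sg_offs n \<times> {..<3})"
proof -
  have "(\<Union>c\<in>sg_offs n. cell_corner c ` {..<3}) = sg_Vnest (Suc n)"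
    by (simp add: sg_Vnest_def sg_V_def cell_corner_image image_UN)
  moreover have "(\<Union>c\<in>sg_offs n. cell_mid c ` {..<3}) = (\<lambda>(c, k). cell_mid c k) ` (sg_offs n \<times> {..<3})"
    by auto
  ultimately show ?thesis
    unfolding sg_V_Suc_cells UN_Un_distrib by simp
qed

lemma bij_betw_cell_mid:
  "bij_betw (\<lambda>(c, k). cell_mid c k) (sg_offs n \<times> {..<3}) (sg_V (Suc n) - sg_Vnest (Suc n))"
proof (rule bij_betw_imageI)
  show "inj_on (\<lambda>(c, k). cell_mid c k) (sg_offs n \<times> {..<3})"
    by (auto simp: inj_on_def cell_mid_inj)
  show "(\<lambda>(c, k). cell_mid c k) ` (sg_offs n \<times> {..<3}) = sg_V (Suc n) - sg_Vnest (Suc n)"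
    unfolding sg_V_Suc_split by (auto simp: sg_Vnest_def)
qed

lemma sg_adj_sym: "sg_adj n x y \<longleftrightarrow> sg_adj n y x"
  unfolding sg_adj_def by blast

lemma sg_adj_cell_mid:
  assumes "c \<in> sg_offs n" "c' \<in> sg_offs n" "k < 3" "k' < 3"
  shows "sg_adj (Suc n) (cell_mid c k) (cell_mid c' k') \<longleftrightarrow> c = c' \<and> k \<noteq> k'"
proof
  assume "sg_adj (Suc n) (cell_mid c k) (cell_mid c' k')"
  then obtain d i where "i < 3" "cell_mid c k \<noteq> cell_mid c' k'"
    "{cell_mid c k, cell_mid c' k'} \<subseteq> {cell_corner d i, cell_mid d i, cell_mid d (prev3 i)}"
    by (auto simp: sg_adj_Suc)
  with assms show "c = c' \<and> k \<noteq> k'"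
    by (auto simp: cell_mid_inj)
next
  assume "c = c' \<and> k \<noteq> k'"
  moreover define i where "i = (if k' = prev3 k then k else k')"
  ultimately have "i < 3"
    "{cell_mid c k, cell_mid c' k'} \<subseteq> {cell_corner c i, cell_mid c i, cell_mid c (prev3 i)}"
    using assms by (auto dest!: less_3_cases simp: prev3_def)
  with assms \<open>c = c' \<and> k \<noteq> k'\<close> show "sg_adj (Suc n) (cell_mid c k) (cell_mid c' k')"
    by (auto simp: sg_adj_Suc cell_mid_inj)
qed

lemma sg_adj_even_cell_mid:
  assumes "c \<in> sg_offs n" "k < 3"
  shows "sg_adj (Suc n) (pscale 2 z) (cell_mid c k) \<longleftrightarrow>
    (\<exists>i<3. pscale 2 z = cell_corner c i \<and> corner_mid_adj i k)"
proof
  assume "sg_adj (Suc n) (pscale 2 z) (cell_mid c k)"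
  then obtain d i where "i < 3"
    "{pscale 2 z, cell_mid c k} \<subseteq> {cell_corner d i, cell_mid d i, cell_mid d (prev3 i)}"
    by (auto simp: sg_adj_Suc)
  with assms show "\<exists>i<3. pscale 2 z = cell_corner c i \<and> corner_mid_adj i k"
    by (auto simp: cell_mid_inj corner_mid_adj_def)
next
  assume "\<exists>i<3. pscale 2 z = cell_corner c i \<and> corner_mid_adj i k"
  with assms show "sg_adj (Suc n) (pscale 2 z) (cell_mid c k)"
    by (auto simp: sg_adj_Suc corner_mid_adj_def)
qed

lemma sg_adj_corner_mid:
  assumes "c \<in> sg_offs n" "i < 3" "k < 3"
  shows "sg_adj (Suc n) (cell_corner c i) (cell_mid c k) \<longleftrightarrow> corner_mid_adj i k"
proof -
  obtain z where "cell_corner c i = pscale 2 z"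
    using cell_corner_eq_pscale[OF assms(2)] by blast
  then show ?thesis
    using sg_adj_even_cell_mid[OF assms(1,3)] cell_corner_adj_iff[OF assms(2)] by metis
qed

lemma not_sg_adj_even: "\<not> sg_adj (Suc n) (pscale 2 z) (pscale 2 z')"
  by (auto simp: sg_adj_Suc)

lemma up_tri_unique:
  assumes "z \<noteq> z'" "{z, z'} \<subseteq> up_tri c 1" "{z, z'} \<subseteq> up_tri c' 1"
  shows "c = c'"
  using assms by (cases c, cases c', cases z, cases z') (auto simp: up_tri_def)

lemma ccw_in_cell_corner:
  "ccw_in (pscale 2 c) 2 x y \<longleftrightarrow> (\<exists>i<3. x = cell_corner c i \<and> y = cell_corner c (next3 i))"
  by (cases c) (simp add: ex_less_3 ccw_in_def cell_corner_def next3_def)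

lemma midpt_cell_corner:
  assumes "i < 3"
  shows "midpt (cell_corner c i) (cell_corner c (next3 i)) = cell_mid c i"
    and "midpt (cell_corner c (next3 i)) (cell_corner c i) = cell_mid c i"
  using less_3_cases[OF assms]
  by (cases c; auto simp: midpt_def cell_corner_def cell_mid_def next3_def)+

section \<open>Number of cells at a vertex\<close>

lemma mem_up_tri_translate:
  "(x - u, y) \<in> up_tri (p - u, q) 1 \<longleftrightarrow> (x, y) \<in> up_tri (p, q) 1"
  "(x, y - v) \<in> up_tri (p, q - v) 1 \<longleftrightarrow> (x, y) \<in> up_tri (p, q) 1"
  by (auto simp: up_tri_def)

lemma sg_V_Suc: "sg_V (Suc n) = sg_V n \<union> padd (2^n, 0) ` sg_V n \<union> padd (0, 2^n) ` sg_V n"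
proof -
  have "padd u ` up_tri c 1 = up_tri (padd u c) 1" for u c
    by (cases u, cases c) (simp add: up_tri_def algebra_simps)
  then show ?thesis
    by (simp add: sg_V_def sg_offs.simps(2) image_UN UN_Un)
qed

lemma sg_V_bounds: "(x, y) \<in> sg_V n \<Longrightarrow> 0 \<le> x \<and> 0 \<le> y \<and> x + y \<le> 2^n"
  by (force simp: sg_V_def up_tri_def dest: sg_offs_bounds)

lemma sg_V0_subset_sg_V: "sg_V0 n \<subseteq> sg_V n"
proof -
  have "up_tri (0, 0) 1 \<subseteq> sg_V n" "up_tri (2^n - 1, 0) 1 \<subseteq> sg_V n" "up_tri (0, 2^n - 1) 1 \<subseteq> sg_V n"
    using corners_in_sg_offs unfolding sg_V_def by blast+
  then show ?thesis
    by (auto simp: sg_V0_def up_tri_def)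
qed

lemma card_cells_containing_Suc:
  "card {c \<in> sg_offs (Suc n). (x, y) \<in> up_tri c 1} =
     card {c \<in> sg_offs n. (x, y) \<in> up_tri c 1} + card {c \<in> sg_offs n. (x - 2^n, y) \<in> up_tri c 1} +
     card {c \<in> sg_offs n. (x, y - 2^n) \<in> up_tri c 1}"
proof -
  let ?K = "(2::int)^n"
  let ?A = "{c \<in> sg_offs n. (x, y) \<in> up_tri c 1}"
  let ?B = "{c \<in> sg_offs n. (x - ?K, y) \<in> up_tri c 1}"
  let ?C = "{c \<in> sg_offs n. (x, y - ?K) \<in> up_tri c 1}"
  have split: "{c \<in> sg_offs (Suc n). (x, y) \<in> up_tri c 1} = ?A \<union> padd (?K, 0) ` ?B \<union> padd (0, ?K) ` ?C"
  proof (rule set_eqI)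
    fix c :: vtx
    show "c \<in> {c \<in> sg_offs (Suc n). (x, y) \<in> up_tri c 1} \<longleftrightarrow> c \<in> ?A \<union> padd (?K, 0) ` ?B \<union> padd (0, ?K) ` ?C"
      by (cases c) (auto simp: mem_sg_offs_Suc mem_padd_image mem_up_tri_translate)
  qed
  have "?A \<inter> padd (?K, 0) ` ?B = {}" "(?A \<union> padd (?K, 0) ` ?B) \<inter> padd (0, ?K) ` ?C = {}"
    by (auto dest!: sg_offs_bounds)
  moreover have "inj (padd (?K, 0))" "inj (padd (0, ?K))"
    by (auto simp: inj_def padd_def)
  ultimately show ?thesis
    unfolding split by (simp add: card_Un_disjoint card_image finite_sg_offs inj_on_subset)
qed

definition cell_count :: "nat \<Rightarrow> vtx \<Rightarrow> nat" where
  "cell_count n z = (if z \<in> sg_V n then if z \<in> sg_V0 n then 1 else 2 else 0)"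

lemma cell_count_Suc:
  "cell_count (Suc n) (x, y) = cell_count n (x, y) + cell_count n (x - 2^n, y) + cell_count n (x, y - 2^n)"
proof -
  let ?K = "(2::int)^n"
  have K: "?K \<ge> 1" by simp
  have bounds: "(u, v) \<in> sg_V n \<Longrightarrow> 0 \<le> u \<and> 0 \<le> v \<and> u + v \<le> ?K" for u v
    by (rule sg_V_bounds)
  have corners: "(0, 0) \<in> sg_V n" "(?K, 0) \<in> sg_V n" "(0, ?K) \<in> sg_V n"
    using sg_V0_subset_sg_V by (auto simp: sg_V0_def)
  have mem: "(x, y) \<in> sg_V (Suc n) \<longleftrightarrow> (x, y) \<in> sg_V n \<or> (x - ?K, y) \<in> sg_V n \<or> (x, y - ?K) \<in> sg_V n"
    by (simp add: sg_V_Suc mem_padd_image)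
  consider "(x, y) \<in> {(?K, 0), (0, ?K), (?K, ?K)}" | "(x, y) \<notin> {(?K, 0), (0, ?K), (?K, ?K)}"
    by blast
  then show ?thesis
  proof cases
    case 1
    moreover have "(?K, - ?K) \<notin> sg_V n" "(- ?K, ?K) \<notin> sg_V n" "(?K, ?K) \<notin> sg_V n"
      using bounds K by force+
    ultimately show ?thesis
      unfolding cell_count_def mem using corners K by (auto simp: sg_V0_def)
  next
    case 2
    have "(x, y) \<in> sg_V n \<Longrightarrow> (x - ?K, y) \<notin> sg_V n \<and> (x, y - ?K) \<notin> sg_V n \<and>
        ((x, y) \<in> sg_V0 n \<longleftrightarrow> (x, y) \<in> sg_V0 (Suc n))"
      using 2 bounds[of x y] bounds[of "x - ?K" y] bounds[of x "y - ?K"] K by (auto simp: sg_V0_def)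
    moreover have "(x - ?K, y) \<in> sg_V n \<Longrightarrow> (x, y - ?K) \<notin> sg_V n \<and>
        ((x - ?K, y) \<in> sg_V0 n \<longleftrightarrow> (x, y) \<in> sg_V0 (Suc n))"
      using 2 bounds[of "x - ?K" y] bounds[of x "y - ?K"] K by (auto simp: sg_V0_def)
    moreover have "(x, y - ?K) \<in> sg_V n \<Longrightarrow> ((x, y - ?K) \<in> sg_V0 n \<longleftrightarrow> (x, y) \<in> sg_V0 (Suc n))"
      using 2 bounds[of x "y - ?K"] K by (auto simp: sg_V0_def)
    ultimately show ?thesis
      by (auto simp: cell_count_def mem)
  qed
qed

lemma card_cells_containing: "card {c \<in> sg_offs n. z \<in> up_tri c 1} = cell_count n z"
proof (induction n arbitrary: z)
  case 0
  show ?case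
    by (simp add: cell_count_def sg_V_def sg_V0_def up_tri_def Collect_conj_eq)
next
  case (Suc n)
  show ?case
    using Suc.IH by (cases z) (simp add: card_cells_containing_Suc cell_count_Suc)
qed

section \<open>Entries of the magnetic Laplacian\<close>

definition lap_coeff :: "nat \<Rightarrow> vtx \<Rightarrow> complex" where
  "lap_coeff n x = (if x \<in> sg_V0 n then 1/2 else 1/4)"

lemma mag_lap_eq:
  "mag_lap n \<omega> x y = (if x = y then 1 else if sg_adj n x y then - lap_coeff n x * \<omega> x y else 0)"
  by (simp add: mag_lap_def lap_coeff_def)

lemma mag_lap_cell_mid:
  assumes "c \<in> sg_offs n" "c' \<in> sg_offs n" "k < 3" "k' < 3"
  shows "mag_lap (Suc n) \<omega> (cell_mid c k) (cell_mid c' k') =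
    (if c = c' then if k = k' then 1 else - \<omega> (cell_mid c k) (cell_mid c k') / 4 else 0)"
  using assms by (auto simp: mag_lap_eq lap_coeff_def sg_adj_cell_mid cell_mid_inj)

lemma shifted_block_cells_off:
  "c \<in> sg_offs n \<Longrightarrow> c' \<in> sg_offs n \<Longrightarrow> k \<in> {..<3} \<Longrightarrow> k' \<in> {..<3} \<Longrightarrow> c' \<noteq> c \<Longrightarrow>
    shifted_block (Suc n) \<omega> lam (case_prod cell_mid (c, k)) (case_prod cell_mid (c', k')) = 0"
  by (simp add: shifted_block_def mag_lap_cell_mid cell_mid_inj)

lemma mag_lap_even_cell_mid:
  assumes "c \<in> sg_offs n" "k < 3"
  shows "mag_lap (Suc n) \<omega> (pscale 2 z) (cell_mid c k) =
    (if \<exists>i<3. pscale 2 z = cell_corner c i \<and> corner_mid_adj i k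
     then - lap_coeff (Suc n) (pscale 2 z) * \<omega> (pscale 2 z) (cell_mid c k) else 0)"
  using assms by (simp add: mag_lap_eq sg_adj_even_cell_mid)

lemma mag_lap_cell_mid_even:
  assumes "c \<in> sg_offs n" "k < 3"
  shows "mag_lap (Suc n) \<omega> (cell_mid c k) (pscale 2 z) =
    (if \<exists>i<3. pscale 2 z = cell_corner c i \<and> corner_mid_adj i k
     then - \<omega> (cell_mid c k) (pscale 2 z) / 4 else 0)"
  using assms by (auto simp: mag_lap_eq lap_coeff_def sg_adj_even_cell_mid sg_adj_sym[of _ "cell_mid c k"])

lemma mag_lap_even_even: "mag_lap (Suc n) \<omega> (pscale 2 z) (pscale 2 z') = (if z = z' then 1 else 0)"
  using not_sg_adj_even inj_pscale2 by (auto simp: mag_lap_eq inj_eq)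

lemma mag_lap_corner_mid:
  assumes "c \<in> sg_offs n" "i < 3" "k < 3"
  shows "mag_lap (Suc n) \<omega> (cell_corner c i) (cell_mid c k) =
    (if corner_mid_adj i k then - lap_coeff (Suc n) (cell_corner c i) * \<omega> (cell_corner c i) (cell_mid c k)
     else 0)"
proof -
  obtain z where "cell_corner c i = pscale 2 z"
    using cell_corner_eq_pscale[OF assms(2)] by blast
  then show ?thesis
    using mag_lap_even_cell_mid[OF assms(1,3)] cell_corner_adj_iff[OF assms(2)] by metis
qed

lemma mag_lap_mid_corner:
  assumes "c \<in> sg_offs n" "i < 3" "k < 3"
  shows "mag_lap (Suc n) \<omega> (cell_mid c k) (cell_corner c i) =
    (if corner_mid_adj i k then - \<omega> (cell_mid c k) (cell_corner c i) / 4 else 0)"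
proof -
  obtain z where "cell_corner c i = pscale 2 z"
    using cell_corner_eq_pscale[OF assms(2)] by blast
  then show ?thesis
    using mag_lap_cell_mid_even[OF assms(1,3)] cell_corner_adj_iff[OF assms(2)] by metis
qed

lemma mag_lap_outside_cell:
  assumes "c \<in> sg_offs n" "k < 3" "z \<notin> up_tri c 1"
  shows "mag_lap (Suc n) \<omega> (pscale 2 z) (cell_mid c k) = 0"
    and "mag_lap (Suc n) \<omega> (cell_mid c k) (pscale 2 z) = 0"
proof -
  have "\<not> (\<exists>i<3. pscale 2 z = cell_corner c i)"
    using assms(3) pscale2_eq_cell_corner_iff by blast
  then show "mag_lap (Suc n) \<omega> (pscale 2 z) (cell_mid c k) = 0"
    and "mag_lap (Suc n) \<omega> (cell_mid c k) (pscale 2 z) = 0"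
    using assms(1,2) by (auto simp: mag_lap_even_cell_mid mag_lap_cell_mid_even)
qed

lemma lap_coeff_pscale:
  "lap_coeff (Suc n) (pscale 2 z) = (if z \<in> sg_V0 n then 1/2 else 1/4)"
  by (simp add: lap_coeff_def sg_V0_Suc inj_image_mem_iff[OF inj_pscale2])

lemma lap_coeff_div_4: "lap_coeff (Suc n) x / 4 = 1 / (if x \<in> sg_V0 (Suc n) then 8 else 16)"
  by (simp add: lap_coeff_def)

lemma level1_flux_cell:
  assumes flux: "flux_connection (Suc n) \<alpha> \<beta> \<omega>" and c: "c \<in> sg_offs n"
  shows "level1_flux \<omega> (cell_corner c) (cell_mid c) (cis (2 * pi * \<alpha>)) (cis (2 * pi * \<beta>))"
proof -
  have unit: "norm (\<omega> x y) = 1 \<and> \<omega> y x = cnj (\<omega> x y)" if "sg_adj (Suc n) x y" for x y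
    using flux that unfolding flux_connection_def by blast
  have up: "\<omega> d (padd d (1, 0)) * \<omega> (padd d (1, 0)) (padd d (0, 1)) * \<omega> (padd d (0, 1)) d =
      cis (2 * pi * \<alpha>)"
    if "d \<in> sg_offs (Suc n)" for d
    using flux that unfolding flux_connection_def exp_2pi_i_eq_cis by blast
  have down: "\<omega> p r * \<omega> r q * \<omega> q p = cis (2 * pi * \<beta>)"
    if "p = padd d (1, 0)" "r = padd d (1, 1)" "q = padd d (0, 1)"
      "sg_adj (Suc n) p r" "sg_adj (Suc n) r q" "sg_adj (Suc n) q p" for d p q r
    using flux that unfolding flux_connection_def exp_2pi_i_eq_cis Let_def by blast
  have sub: "child_off c i \<in> sg_offs (Suc n)" if "i < 3" for i
    using c that unfolding sg_offs_Suc_child_off by blast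
  show ?thesis
    unfolding level1_flux_def
  proof (intro conjI)
    show "\<forall>i<3. \<forall>k<3. corner_mid_adj i k \<longrightarrow> norm (\<omega> (cell_corner c i) (cell_mid c k)) = 1 \<and>
        \<omega> (cell_mid c k) (cell_corner c i) = cnj (\<omega> (cell_corner c i) (cell_mid c k))"
      using unit sg_adj_corner_mid[OF c] by blast
    show "\<forall>k<3. \<forall>k'<3. k \<noteq> k' \<longrightarrow> norm (\<omega> (cell_mid c k) (cell_mid c k')) = 1 \<and>
        \<omega> (cell_mid c k') (cell_mid c k) = cnj (\<omega> (cell_mid c k) (cell_mid c k'))"
      using unit sg_adj_cell_mid[OF c c] by blast
    show "\<forall>i<3. \<omega> (cell_corner c i) (cell_mid c i) * \<omega> (cell_mid c i) (cell_mid c (prev3 i)) *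
        \<omega> (cell_mid c (prev3 i)) (cell_corner c i) = cis (2 * pi * \<alpha>)"
    proof (intro allI impI)
      fix i :: nat
      assume "i < 3"
      then show "\<omega> (cell_corner c i) (cell_mid c i) * \<omega> (cell_mid c i) (cell_mid c (prev3 i)) *
          \<omega> (cell_mid c (prev3 i)) (cell_corner c i) = cis (2 * pi * \<alpha>)"
        using less_3_cases[OF \<open>i < 3\<close>] up[OF sub[OF \<open>i < 3\<close>]]
        by (cases c) (auto simp: child_off_def cell_corner_def cell_mid_def prev3_def algebra_simps)
    qed
    show "\<omega> (cell_mid c 0) (cell_mid c 1) * \<omega> (cell_mid c 1) (cell_mid c 2) *
        \<omega> (cell_mid c 2) (cell_mid c 0) = cis (2 * pi * \<beta>)"
    proof (rule down[of "cell_mid c 0" "pscale 2 c" "cell_mid c 1" "cell_mid c 2"])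
      show "sg_adj (Suc n) (cell_mid c 0) (cell_mid c 1)" "sg_adj (Suc n) (cell_mid c 1) (cell_mid c 2)"
        "sg_adj (Suc n) (cell_mid c 2) (cell_mid c 0)"
        using sg_adj_cell_mid[OF c c] by simp_all
    qed (simp_all add: cell_mid_def)
  qed
qed

section \<open>The Schur complement\<close>

locale gasket_schur =
  fixes n :: nat and \<alpha> \<beta> lam :: real and \<omega> Dinv :: "vtx \<Rightarrow> vtx \<Rightarrow> complex"
  assumes flux: "flux_connection (Suc n) \<alpha> \<beta> \<omega>"
    and inverse: "inverse_on (sg_V (Suc n) - sg_Vnest (Suc n)) (shifted_block (Suc n) \<omega> lam) Dinv"
begin

definition cell_block :: "vtx \<Rightarrow> nat \<Rightarrow> nat \<Rightarrow> complex" where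
  "cell_block c k k' = shifted_block (Suc n) \<omega> lam (cell_mid c k) (cell_mid c k')"

lemma cell_block_eq:
  "c \<in> sg_offs n \<Longrightarrow> k < 3 \<Longrightarrow> k' < 3 \<Longrightarrow>
    cell_block c k k' = (if k = k' then 1 - of_real lam else - \<omega> (cell_mid c k) (cell_mid c k') / 4)"
  by (simp add: cell_block_def shifted_block_def mag_lap_cell_mid cell_mid_inj)

lemma det3_cell_block:
  assumes "c \<in> sg_offs n"
  shows "det3 (cell_block c) = of_real (D_fun \<beta> lam)"
  unfolding D_fun_eq
  by (rule level1_det[OF level1_flux_cell[OF flux assms]]) (simp add: cell_block_eq[OF assms])

lemma cell_corner_sums:
  assumes "c \<in> sg_offs n" "i < 3"
  shows "corner_sum (adj3 (cell_block c)) (\<lambda>k. \<omega> (cell_corner c i) (cell_mid c k))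
      (\<lambda>k. \<omega> (cell_mid c k) (cell_corner c i)) i i = of_real (A_fun \<alpha> \<beta> lam) / 8"
    and "corner_sum (adj3 (cell_block c)) (\<lambda>k. \<omega> (cell_corner c i) (cell_mid c k))
      (\<lambda>k. \<omega> (cell_mid c k) (cell_corner c (next3 i))) i (next3 i) =
      Psi_fun \<alpha> \<beta> lam * \<omega> (cell_corner c i) (cell_mid c i) * \<omega> (cell_mid c i) (cell_corner c (next3 i))"
    and "corner_sum (adj3 (cell_block c)) (\<lambda>k. \<omega> (cell_corner c (next3 i)) (cell_mid c k))
      (\<lambda>k. \<omega> (cell_mid c k) (cell_corner c i)) (next3 i) i =
      cnj (Psi_fun \<alpha> \<beta> lam) * \<omega> (cell_corner c (next3 i)) (cell_mid c i) *
      \<omega> (cell_mid c i) (cell_corner c i)"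
  unfolding A_fun_eq Psi_fun_eq cnj_Psi_poly cnj_cis_eq
  by (rule level1_corner_sums[OF level1_flux_cell[OF flux assms(1)]];
      simp add: cell_block_eq[OF assms(1)] assms(2))+

lemma inverse_on_cells:
  "inverse_on (sg_offs n \<times> {..<3})
     (\<lambda>p q. shifted_block (Suc n) \<omega> lam (case_prod cell_mid p) (case_prod cell_mid q))
     (\<lambda>p q. Dinv (case_prod cell_mid p) (case_prod cell_mid q))"
  using inverse_on_reindex[OF bij_betw_cell_mid inverse] by simp

lemma D_fun_nonzero: "D_fun \<beta> lam \<noteq> 0"
proof -
  have "(\<Sum>j<3. cell_block (0, 0) k j * Dinv (cell_mid (0, 0) j) (cell_mid (0, 0) k')) =
      (if k = k' then 1 else 0)"
    if "k < 3" "k' < 3" for k k'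
    using block_diagonal_inverse_block[OF finite_sg_offs inverse_on_cells shifted_block_cells_off
        corners_in_sg_offs(1)] that
    by (simp add: cell_block_def)
  then have "det3 (cell_block (0, 0)) \<noteq> 0"
    by (rule det3_nonzero_if_right_inverse)
  then show ?thesis
    using det3_cell_block[OF corners_in_sg_offs(1)] by simp
qed

lemma Dinv_cell_mid:
  assumes "c \<in> sg_offs n" "c' \<in> sg_offs n" "k < 3" "k' < 3"
  shows "Dinv (cell_mid c k) (cell_mid c' k') =
    (if c' = c then adj3 (cell_block c) k k' / of_real (D_fun \<beta> lam) else 0)"
proof -
  define R where "R d j j' = adj3 (cell_block d) j j' / of_real (D_fun \<beta> lam)" for d j j'
  have block: "(\<Sum>j\<in>{..<3}.
      shifted_block (Suc n) \<omega> lam (case_prod cell_mid (d, i)) (case_prod cell_mid (d, j)) * R d j i') =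
      (if i = i' then 1 else 0)" if "d \<in> sg_offs n" "i \<in> {..<3}" "i' \<in> {..<3}" for d i i'
    using mult_adj3[of i i' "cell_block d"] that det3_cell_block[OF that(1)] D_fun_nonzero
    by (simp add: R_def cell_block_def sum_divide_distrib[symmetric])
  have "(\<Sum>z\<in>sg_offs n \<times> {..<3}. shifted_block (Suc n) \<omega> lam (case_prod cell_mid p) (case_prod cell_mid z) *
      (if fst z = fst q then R (fst z) (snd z) (snd q) else 0)) = (if p = q then 1 else 0)"
    if "p \<in> sg_offs n \<times> {..<3}" "q \<in> sg_offs n \<times> {..<3}" for p q
    using block_diagonal_right_inverse[OF finite_sg_offs shifted_block_cells_off block that]
    by (simp add: case_prod_beta')
  from inverse_on_unique[OF _ inverse_on_cells this, of "(c, k)" "(c', k')"]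
  show ?thesis
    using assms finite_sg_offs by (simp add: R_def)
qed

definition cell_term :: "vtx \<Rightarrow> vtx \<Rightarrow> vtx \<Rightarrow> complex" where
  "cell_term x y c = (\<Sum>k<3. \<Sum>k'<3. mag_lap (Suc n) \<omega> x (cell_mid c k) *
     (adj3 (cell_block c) k k' / of_real (D_fun \<beta> lam)) * mag_lap (Suc n) \<omega> (cell_mid c k') y)"

lemma sum_Dinv_cell_mid:
  assumes "c \<in> sg_offs n" "k < 3"
  shows "(\<Sum>c'\<in>sg_offs n. \<Sum>k'<3. a * Dinv (cell_mid c k) (cell_mid c' k') * b c' k') =
    (\<Sum>k'<3. a * (adj3 (cell_block c) k k' / of_real (D_fun \<beta> lam)) * b c k')"
proof -
  have "(\<Sum>c'\<in>sg_offs n. \<Sum>k'<3. a * Dinv (cell_mid c k) (cell_mid c' k') * b c' k') =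
      (\<Sum>c'\<in>sg_offs n. \<Sum>k'<3. a * (if c' = c then adj3 (cell_block c) k k' / of_real (D_fun \<beta> lam) else 0) *
        b c' k')"
    using assms by (intro sum.cong refl) (simp add: Dinv_cell_mid)
  also have "\<dots> = (\<Sum>c'\<in>sg_offs n. if c' = c then
      \<Sum>k'<3. a * (adj3 (cell_block c) k k' / of_real (D_fun \<beta> lam)) * b c k' else 0)"
    by (intro sum.cong refl) simp
  finally show ?thesis
    using assms finite_sg_offs by simp
qed

lemma schur_eq_sum_cell_term:
  "schur (Suc n) \<omega> lam Dinv x y = shifted_block (Suc n) \<omega> lam x y - (\<Sum>c\<in>sg_offs n. cell_term x y c)"
proof -
  let ?L = "mag_lap (Suc n) \<omega>" and ?P = "sg_offs n \<times> {..<3::nat}"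
  have cells: "(\<Sum>p\<in>?P. g p) = (\<Sum>c\<in>sg_offs n. \<Sum>k<3. g (c, k))" for g :: "vtx \<times> nat \<Rightarrow> complex"
    by (simp add: sum.cartesian_product)
  have "(\<Sum>u\<in>sg_V (Suc n) - sg_Vnest (Suc n). \<Sum>v\<in>sg_V (Suc n) - sg_Vnest (Suc n).
      ?L x u * Dinv u v * ?L v y) =
      (\<Sum>p\<in>?P. \<Sum>q\<in>?P. ?L x (case_prod cell_mid p) * Dinv (case_prod cell_mid p) (case_prod cell_mid q) *
        ?L (case_prod cell_mid q) y)"
    by (simp only: sum.reindex_bij_betw[OF bij_betw_cell_mid, symmetric])
  also have "\<dots> = (\<Sum>c\<in>sg_offs n. \<Sum>k<3. \<Sum>c'\<in>sg_offs n. \<Sum>k'<3.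
      ?L x (cell_mid c k) * Dinv (cell_mid c k) (cell_mid c' k') * ?L (cell_mid c' k') y)"
    by (simp only: cells case_prod_conv)
  also have "\<dots> = (\<Sum>c\<in>sg_offs n. cell_term x y c)"
    unfolding cell_term_def by (intro sum.cong refl) (simp add: sum_Dinv_cell_mid)
  finally show ?thesis
    by (simp add: schur_def)
qed

lemma cell_term_corner:
  assumes "c \<in> sg_offs n" "i < 3" "j < 3"
  shows "cell_term (cell_corner c i) (cell_corner c j) c =
    lap_coeff (Suc n) (cell_corner c i) / 4 *
    corner_sum (adj3 (cell_block c)) (\<lambda>k. \<omega> (cell_corner c i) (cell_mid c k))
      (\<lambda>k. \<omega> (cell_mid c k) (cell_corner c j)) i j / of_real (D_fun \<beta> lam)"
proof -
  have "cell_term (cell_corner c i) (cell_corner c j) c =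
      (\<Sum>k<3. \<Sum>k'<3. lap_coeff (Suc n) (cell_corner c i) / 4 *
        ((if corner_mid_adj i k then \<omega> (cell_corner c i) (cell_mid c k) else 0) * adj3 (cell_block c) k k' *
         (if corner_mid_adj j k' then \<omega> (cell_mid c k') (cell_corner c j) else 0)) / of_real (D_fun \<beta> lam))"
    unfolding cell_term_def using assms
    by (intro sum.cong refl) (simp add: mag_lap_corner_mid mag_lap_mid_corner)
  then show ?thesis
    by (simp add: corner_sum_def sum_distrib_left sum_divide_distrib)
qed

lemma cell_term_outside:
  assumes "c \<in> sg_offs n" "z \<notin> up_tri c 1"
  shows "cell_term (pscale 2 z) y c = 0" and "cell_term x (pscale 2 z) c = 0"
  using assms by (auto simp: cell_term_def mag_lap_outside_cell intro!: sum.neutral)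

lemma schur_diag:
  assumes "a \<in> sg_Vnest (Suc n)"
  shows "schur (Suc n) \<omega> lam Dinv a a = 1 - lam - A_fun \<alpha> \<beta> lam / (64 * D_fun \<beta> lam)"
proof -
  obtain z where z: "z \<in> sg_V n" "a = pscale 2 z"
    using assms by (auto simp: sg_Vnest_def)
  define C where "C = {c \<in> sg_offs n. z \<in> up_tri c 1}"
  define T where "T = lap_coeff (Suc n) a / 4 * (complex_of_real (A_fun \<alpha> \<beta> lam) / 8) /
    complex_of_real (D_fun \<beta> lam)"
  have cell_value: "cell_term a a c = T" if "c \<in> C" for c
  proof -
    have c: "c \<in> sg_offs n"
      using that by (simp add: C_def)
    have "z \<in> up_tri c 1"
      using that by (simp add: C_def)
    then obtain i where i: "i < 3" "a = cell_corner c i"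
      using pscale2_eq_cell_corner_iff[of z c] z(2) by blast
    show ?thesis
      unfolding T_def i(2) cell_term_corner[OF c i(1) i(1)] cell_corner_sums(1)[OF c i(1)] by simp
  qed
  have "(\<Sum>c\<in>sg_offs n. cell_term a a c) = (\<Sum>c\<in>C. cell_term a a c)"
    by (rule sum.mono_neutral_right) (auto simp: C_def finite_sg_offs z(2) cell_term_outside)
  also have "\<dots> = of_nat (cell_count n z) * T"
    using cell_value card_cells_containing[of n z] by (simp add: C_def)
  also have "\<dots> = A_fun \<alpha> \<beta> lam / (64 * D_fun \<beta> lam)"
    using z by (simp add: T_def cell_count_def lap_coeff_pscale)
  finally show ?thesis
    using z by (simp add: schur_eq_sum_cell_term shifted_block_def mag_lap_even_even)
qed

lemma schur_cell_corners:
  assumes c: "c \<in> sg_offs n" and "i < 3" "j < 3" "i \<noteq> j"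
  shows "schur (Suc n) \<omega> lam Dinv (cell_corner c i) (cell_corner c j) =
    - cell_term (cell_corner c i) (cell_corner c j) c"
proof -
  obtain z z' where z: "z \<in> up_tri c 1" "cell_corner c i = pscale 2 z"
    and z': "z' \<in> up_tri c 1" "cell_corner c j = pscale 2 z'"
    using cell_corner_eq_pscale assms(2,3) by metis
  have "z \<noteq> z'"
    using z(2) z'(2) cell_corner_inj[of i j c] assms(2-4) by auto
  have "cell_term (pscale 2 z) (pscale 2 z') d = 0" if "d \<in> sg_offs n - {c}" for d
  proof (cases "z \<in> up_tri d 1")
    case True
    then have "z' \<notin> up_tri d 1"
      using up_tri_unique[OF \<open>z \<noteq> z'\<close>] z(1) z'(1) that by blast
    then show ?thesis
      using that by (simp add: cell_term_outside)
  next
    case False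
    then show ?thesis
      using that by (simp add: cell_term_outside)
  qed
  then have "(\<Sum>d\<in>sg_offs n. cell_term (pscale 2 z) (pscale 2 z') d) =
      cell_term (pscale 2 z) (pscale 2 z') c"
    using c finite_sg_offs by (simp add: sum.remove)
  moreover have "shifted_block (Suc n) \<omega> lam (pscale 2 z) (pscale 2 z') = 0"
    using \<open>z \<noteq> z'\<close> by (simp add: shifted_block_def mag_lap_even_even inj_eq[OF inj_pscale2])
  ultimately show ?thesis
    unfolding z(2) z'(2) schur_eq_sum_cell_term by simp
qed

lemma schur_ccw:
  assumes "ccw_in c0 2 x y" "c0 \<in> sg_cells_nest (Suc n)"
  shows "schur (Suc n) \<omega> lam Dinv x y =
    - (Psi_fun \<alpha> \<beta> lam * \<omega> x (midpt x y) * \<omega> (midpt x y) y) /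
      ((if x \<in> sg_V0 (Suc n) then 8 else 16) * D_fun \<beta> lam)"
proof -
  obtain c where c: "c \<in> sg_offs n" "c0 = pscale 2 c"
    using assms(2) by (auto simp: sg_cells_nest_def)
  obtain i where i: "i < 3" "x = cell_corner c i" "y = cell_corner c (next3 i)"
    using assms(1) ccw_in_cell_corner unfolding c(2) by blast
  have ne: "i \<noteq> next3 i"
    by (simp add: next3_def)
  show ?thesis
    unfolding i(2,3) schur_cell_corners[OF c(1) i(1) next3_less[OF i(1)] ne]
      cell_term_corner[OF c(1) i(1) next3_less[OF i(1)]] cell_corner_sums(2)[OF c(1) i(1)]
      midpt_cell_corner(1)[OF i(1)]
    by (simp add: lap_coeff_div_4)
qed

lemma schur_cw:
  assumes "ccw_in c0 2 y x" "c0 \<in> sg_cells_nest (Suc n)"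
  shows "schur (Suc n) \<omega> lam Dinv x y =
    - (cnj (Psi_fun \<alpha> \<beta> lam) * \<omega> x (midpt x y) * \<omega> (midpt x y) y) /
      ((if x \<in> sg_V0 (Suc n) then 8 else 16) * D_fun \<beta> lam)"
proof -
  obtain c where c: "c \<in> sg_offs n" "c0 = pscale 2 c"
    using assms(2) by (auto simp: sg_cells_nest_def)
  obtain i where i: "i < 3" "y = cell_corner c i" "x = cell_corner c (next3 i)"
    using assms(1) ccw_in_cell_corner unfolding c(2) by blast
  have ne: "next3 i \<noteq> i"
    by (simp add: next3_def)
  show ?thesis
    unfolding i(2,3) schur_cell_corners[OF c(1) next3_less[OF i(1)] i(1) ne]
      cell_term_corner[OF c(1) next3_less[OF i(1)] i(1)] cell_corner_sums(3)[OF c(1) i(1)]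
      midpt_cell_corner(2)[OF i(1)]
    by (simp add: lap_coeff_div_4)
qed

end

theorem proposition3p1:
  fixes N :: nat and \<alpha> \<beta> lam :: real
    and \<omega> Dinv :: "vtx \<Rightarrow> vtx \<Rightarrow> complex"
  assumes "N \<ge> 1"
    and "flux_connection N \<alpha> \<beta> \<omega>"
    and "inverse_on (sg_V N - sg_Vnest N) (shifted_block N \<omega> lam) Dinv"
  shows
    "(\<forall>a\<in>sg_Vnest N.
        schur N \<omega> lam Dinv a a
          = 1 - lam - A_fun \<alpha> \<beta> lam / (64 * D_fun \<beta> lam)) \<and>
     (\<forall>ai aj c. ai \<in> sg_Vnest N \<longrightarrow> aj \<in> sg_Vnest N \<longrightarrow> ai \<noteq> aj \<longrightarrow>
        c \<in> sg_cells_nest N \<longrightarrow> ccw_in c 2 ai aj \<longrightarrow> ai \<notin> sg_V0 N \<longrightarrow>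
        schur N \<omega> lam Dinv ai aj
          = - (Psi_fun \<alpha> \<beta> lam * \<omega> ai (midpt ai aj) * \<omega> (midpt ai aj) aj)
              / (16 * D_fun \<beta> lam)) \<and>
     (\<forall>ai aj c. ai \<in> sg_Vnest N \<longrightarrow> aj \<in> sg_Vnest N \<longrightarrow> ai \<noteq> aj \<longrightarrow>
        c \<in> sg_cells_nest N \<longrightarrow> ccw_in c 2 ai aj \<longrightarrow> ai \<in> sg_V0 N \<longrightarrow>
        schur N \<omega> lam Dinv ai aj
          = - (Psi_fun \<alpha> \<beta> lam * \<omega> ai (midpt ai aj) * \<omega> (midpt ai aj) aj)
              / (8 * D_fun \<beta> lam)) \<and>
     (\<forall>ai aj c. ai \<in> sg_Vnest N \<longrightarrow> aj \<in> sg_Vnest N \<longrightarrow> ai \<noteq> aj \<longrightarrow>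
        c \<in> sg_cells_nest N \<longrightarrow> ccw_in c 2 aj ai \<longrightarrow> ai \<notin> sg_V0 N \<longrightarrow>
        schur N \<omega> lam Dinv ai aj
          = - (cnj (Psi_fun \<alpha> \<beta> lam) * \<omega> ai (midpt ai aj) * \<omega> (midpt ai aj) aj)
              / (16 * D_fun \<beta> lam)) \<and>
     (\<forall>ai aj c. ai \<in> sg_Vnest N \<longrightarrow> aj \<in> sg_Vnest N \<longrightarrow> ai \<noteq> aj \<longrightarrow>
        c \<in> sg_cells_nest N \<longrightarrow> ccw_in c 2 aj ai \<longrightarrow> ai \<in> sg_V0 N \<longrightarrow>
        schur N \<omega> lam Dinv ai aj
          = - (cnj (Psi_fun \<alpha> \<beta> lam) * \<omega> ai (midpt ai aj) * \<omega> (midpt ai aj) aj)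
              / (8 * D_fun \<beta> lam))"
proof -
  obtain n where N: "N = Suc n"
    using assms(1) by (cases N) auto
  interpret gasket_schur n \<alpha> \<beta> lam \<omega> Dinv
    using assms(2,3) unfolding N by unfold_locales
  show ?thesis
    unfolding N using schur_diag by (intro conjI allI impI ballI) (auto dest: schur_ccw schur_cw)
qed

end
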